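(* Let $\Theta$ be a branch of a tableau of $\mathbf{TAB}_{\mathbf{IB}}$. Then $\Theta$ is infinite if and only if there is an infinite sequence of nominals $i_0\prec_\Theta i_1\prec_\Theta i_2\prec_\Theta\cdots$.
   Context: Hybrid language: fix disjoint countably infinite sets $\mathbf{Prop}$ (propositional variables) and $\mathbf{Nom}$ (nominals). Formulas: $\varphi ::= p \mid i \mid \neg\varphi \mid \varphi\land\varphi \mid \Diamond\varphi \mid @_i\varphi$ with $p\in\mathbf{Prop}$, $i\in\mathbf{Nom}$; $\Box\varphi$ abbreviates $\neg\Diamond\neg\varphi$. Tableau calculus $\mathbf{TAB}_{\mathbf{IB}}$. A tableau is a well-founded tree whose nodes are formulas of the form $@_i\varphi$; its root is a formula $@_i\varphi$ (the root formula) where $i$ does not occur in $\varphi$. A branch is a maximal path; $\varphi\in\Theta$ means $\varphi$ occurs on branch $\Theta$. Each branch is extended by applying the rules below to its formulas as often as possible, except that no further formula is added to a branch once either (i) every new formula generated by applying any rule already occurs on the branch, or (ii) the branch is closed, i.e. contains $@_i\varphi$ and $@_i\neg\varphi$ for some formula $\varphi$ and nominal $i$. An accessibility formula is a formula $@_i\Diamond j$ added by rule $[\Diamond]$ (with $j$ the new nominal). Rules (premises already on the branch; conclusions added to it): [$\neg\neg$] from $@_i\neg\neg\varphi$ add $@_i\varphi$; [$\land$] from $@_i(\varphi\land\psi)$ add $@_i\varphi$ and $@_i\psi$; [$\neg\land$] from $@_i\neg(\varphi\land\psi)$ split the branch into one extended by $@_i\neg\varphi$ and one extended by $@_i\neg\psi$;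 [$\Diamond$] from $@_i\Diamond\varphi$, which is not an accessibility formula, add $@_i\Diamond j$ and $@_j\varphi$ where $j$ is a nominal not occurring on the branch; this rule is applied at most once per formula, and only if $i$ is a quasi-urfather on the branch (defined below); [$\neg\Diamond$] from $@_i\neg\Diamond\varphi$ and $@_i\Diamond j$ add $@_j\neg\varphi$; [$\Box_{sym}$] from $@_i\Box\varphi$ and $@_j\Diamond i$ add $@_j\varphi$; [$@$] from $@_i@_j\varphi$ add $@_j\varphi$; [$\neg@$] from $@_i\neg@_j\varphi$ add $@_j\neg\varphi$; [$Id$] from $@_i\varphi$, which is not an accessibility formula, and $@_i j$ add $@_j\varphi$; [$Ref$] for any nominal $i$ occurring on the branch add $@_i i$; ($\mathcal{I}$) for any nominal $i$ occurring on the branch add $@_i\neg\Diamond i$. Auxiliary notions for a branch $\Theta$. $@_i\varphi$ is a quasi-subformula of $@_j\psi$ if $\varphi$ is a subformula of $\psi$, or $\varphi=\neg\chi$ with $\chi$ a subformula of $\psi$. For a nominal $i$ occurring in $\Theta$, $T^\Theta(i)=\{\varphi \mid @_i\varphi\in\Theta$ and $@_i\varphi$ is a quasi-subformula of the root formula$\}$. Nominals $i,j$ are twins if $T^\Theta(i)=T^\Theta(j)$. $i\prec_\Theta j$ if $j$ was introduced by applying $[\Diamond]$ to a formula $@_i\Diamond\varphi$ (equivalently, the accessibility formula $@_i\Diamond j$ is in $\Theta$); $\prec_\Theta^*$ is its reflexive transitive closure. A nominal $i$ is a quasi-urfather on $\Theta$ if there are no twins $j\neq k$ with $j\prec_\Theta^*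 i$ and $k\prec_\Theta^* i$. *)

theory Defs
  imports Main
begin

datatype fm = Pro nat | Nom nat | Neg fm | Con fm fm | Dia fm | At nat fm

definition Box :: "fm \<Rightarrow> fm" where
  "Box \<phi> = Neg (Dia (Neg \<phi>))"

primrec noms :: "fm \<Rightarrow> nat set" where
  "noms (Pro p) = {}"
| "noms (Nom i) = {i}"
| "noms (Neg \<phi>) = noms \<phi>"
| "noms (Con \<phi> \<psi>) = noms \<phi> \<union> noms \<psi>"
| "noms (Dia \<phi>) = noms \<phi>"
| "noms (At i \<phi>) = insert i (noms \<phi>)"

primrec subfs :: "fm \<Rightarrow> fm set" where
  "subfs (Pro p) = {Pro p}"
| "subfs (Nom i) = {Nom i}"
| "subfs (Neg \<phi>) = insert (Neg \<phi>) (subfs \<phi>)"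
| "subfs (Con \<phi> \<psi>) = insert (Con \<phi> \<psi>) (subfs \<phi> \<union> subfs \<psi>)"
| "subfs (Dia \<phi>) = insert (Dia \<phi>) (subfs \<phi>)"
| "subfs (At i \<phi>) = insert (At i \<phi>) (subfs \<phi>)"

text \<open>A tableau node formula @_i phi is represented as the pair (i, phi).\<close>
type_synonym lfm = "nat \<times> fm"

definition lnoms :: "lfm \<Rightarrow> nat set" where
  "lnoms x = insert (fst x) (noms (snd x))"

definition nomsof :: "lfm set \<Rightarrow> nat set" where
  "nomsof F = (\<Union>x\<in>F. lnoms x)"

definition quasi_sub :: "lfm \<Rightarrow> lfm \<Rightarrow> bool" where
  "quasi_sub x y \<longleftrightarrow> snd x \<in> subfs (snd y) \<or> (\<exists>\<chi>. snd x = Neg \<chi> \<and> \<chi> \<in> subfs (snd y))"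

definition closed :: "lfm set \<Rightarrow> bool" where
  "closed F \<longleftrightarrow> (\<exists>i \<phi>. (i, \<phi>) \<in> F \<and> (i, Neg \<phi>) \<in> F)"

text \<open>Ord cs: application of a rule other than [Dia]; cs are the formulas added
  (for the splitting rule [neg-and], the conclusion chosen on this branch).
  Dstep i psi j: application of [Dia] to the premise @_i Dia psi, introducing the new
  nominal j; it adds the accessibility formula @_i Dia j and the formula @_j psi.\<close>

datatype step = Ord "lfm list" | Dstep nat fm nat

fun step_forms :: "step \<Rightarrow> lfm list" where
  "step_forms (Ord cs) = cs"
| "step_forms (Dstep i \<psi> j) = [(i, Dia (Nom j)), (j, \<psi>)]"

fun step_nonacc :: "step \<Rightarrow> lfm set" where
  "step_nonacc (Ord cs) = set cs"
| "step_nonacc (Dstep i \<psi> j) = {(j, \<psi>)}"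

definition forms :: "lfm \<Rightarrow> step list \<Rightarrow> lfm set" where
  "forms r ss = insert r (\<Union>s\<in>set ss. set (step_forms s))"

text \<open>Formulas having an occurrence on the branch that is not an accessibility formula.\<close>
definition nonacc :: "lfm \<Rightarrow> step list \<Rightarrow> lfm set" where
  "nonacc r ss = insert r (\<Union>s\<in>set ss. step_nonacc s)"

definition accrel :: "step list \<Rightarrow> (nat \<times> nat) set" where
  "accrel ss = {(i, j). \<exists>\<psi>. Dstep i \<psi> j \<in> set ss}"

definition Tset :: "lfm \<Rightarrow> step list \<Rightarrow> nat \<Rightarrow> fm set" where
  "Tset r ss i = {\<phi>. (i, \<phi>) \<in> forms r ss \<and> quasi_sub (i, \<phi>) r}"

definition twins :: "lfm \<Rightarrow> step list \<Rightarrow> nat \<Rightarrow> nat \<Rightarrow> bool" where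
  "twins r ss i j \<longleftrightarrow> i \<in> nomsof (forms r ss) \<and> j \<in> nomsof (forms r ss) \<and>
     Tset r ss i = Tset r ss j"

definition quasi_urfather :: "lfm \<Rightarrow> step list \<Rightarrow> nat \<Rightarrow> bool" where
  "quasi_urfather r ss i \<longleftrightarrow>
     \<not> (\<exists>j k. j \<noteq> k \<and> twins r ss j k \<and> (j, i) \<in> (accrel ss)\<^sup>* \<and> (k, i) \<in> (accrel ss)\<^sup>*)"

text \<open>Conclusions of the non-splitting rules other than [Dia], given the formula set F,
  the set NA of formulas with a non-accessibility occurrence and the nominals N.\<close>
definition simple_concl :: "lfm set \<Rightarrow> lfm set \<Rightarrow> nat set \<Rightarrow> lfm list \<Rightarrow> bool" where
  "simple_concl F NA N cs \<longleftrightarrow>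
     (\<exists>i \<phi>. (i, Neg (Neg \<phi>)) \<in> F \<and> cs = [(i, \<phi>)]) \<or>
     (\<exists>i \<phi> \<psi>. (i, Con \<phi> \<psi>) \<in> F \<and> cs = [(i, \<phi>), (i, \<psi>)]) \<or>
     (\<exists>i \<phi> j. (i, Neg (Dia \<phi>)) \<in> F \<and> (i, Dia (Nom j)) \<in> F \<and> cs = [(j, Neg \<phi>)]) \<or>
     (\<exists>i \<phi> j. (i, Box \<phi>) \<in> F \<and> (j, Dia (Nom i)) \<in> F \<and> cs = [(j, \<phi>)]) \<or>
     (\<exists>i j \<phi>. (i, At j \<phi>) \<in> F \<and> cs = [(j, \<phi>)]) \<or>
     (\<exists>i j \<phi>. (i, Neg (At j \<phi>)) \<in> F \<and> cs = [(j, Neg \<phi>)]) \<or>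
     (\<exists>i j \<phi>. (i, \<phi>) \<in> NA \<and> (i, Nom j) \<in> F \<and> cs = [(j, \<phi>)]) \<or>
     (\<exists>i. i \<in> N \<and> cs = [(i, Nom i)]) \<or>
     (\<exists>i. i \<in> N \<and> cs = [(i, Neg (Dia (Nom i)))])"

definition split_concl :: "lfm set \<Rightarrow> lfm list \<Rightarrow> bool" where
  "split_concl F cs \<longleftrightarrow>
     (\<exists>i \<phi> \<psi>. (i, Neg (Con \<phi> \<psi>)) \<in> F \<and> (cs = [(i, Neg \<phi>)] \<or> cs = [(i, Neg \<psi>)]))"

definition dia_ok :: "lfm \<Rightarrow> step list \<Rightarrow> nat \<Rightarrow> fm \<Rightarrow> nat \<Rightarrow> bool" where
  "dia_ok r ss i \<psi> j \<longleftrightarrow>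
     (i, Dia \<psi>) \<in> nonacc r ss \<and> j \<notin> nomsof (forms r ss) \<and>
     quasi_urfather r ss i \<and> \<not> (\<exists>j'. Dstep i \<psi> j' \<in> set ss)"

fun step_ok :: "lfm \<Rightarrow> step list \<Rightarrow> step \<Rightarrow> bool" where
  "step_ok r ss (Ord cs) \<longleftrightarrow> \<not> closed (forms r ss) \<and>
     (simple_concl (forms r ss) (nonacc r ss) (nomsof (forms r ss)) cs \<or> split_concl (forms r ss) cs) \<and>
     \<not> set cs \<subseteq> forms r ss"
| "step_ok r ss (Dstep i \<psi> j) \<longleftrightarrow> \<not> closed (forms r ss) \<and> dia_ok r ss i \<psi> j"

definition saturated :: "lfm \<Rightarrow> step list \<Rightarrow> bool" where
  "saturated r ss \<longleftrightarrow> closed (forms r ss) \<or>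
     ((\<forall>cs. simple_concl (forms r ss) (nonacc r ss) (nomsof (forms r ss)) cs \<longrightarrow> set cs \<subseteq> forms r ss) \<and>
      (\<forall>i \<phi> \<psi>. (i, Neg (Con \<phi> \<psi>)) \<in> forms r ss \<longrightarrow>
          (i, Neg \<phi>) \<in> forms r ss \<or> (i, Neg \<psi>) \<in> forms r ss) \<and>
      (\<forall>i \<psi> j. \<not> dia_ok r ss i \<psi> j))"

text \<open>A branch is given by its root formula r and the sequence s of rule applications
  along it: s n = Some st for the n-th step; s n = None once the branch has ended.\<close>

definition prefix :: "(nat \<Rightarrow> step option) \<Rightarrow> nat \<Rightarrow> step list" where
  "prefix s n = map (\<lambda>k. the (s k)) [0..<n]"

definition root_ok :: "lfm \<Rightarrow> bool" where
  "root_ok r \<longleftrightarrow> fst r \<notin> noms (snd r)"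

definition is_branch :: "lfm \<Rightarrow> (nat \<Rightarrow> step option) \<Rightarrow> bool" where
  "is_branch r s \<longleftrightarrow> root_ok r \<and>
     (\<forall>n. s n = None \<longrightarrow> s (Suc n) = None) \<and>
     (\<forall>n st. s n = Some st \<longrightarrow> step_ok r (prefix s n) st) \<and>
     (\<forall>n. s n = None \<and> (\<forall>m<n. s m \<noteq> None) \<longrightarrow> saturated r (prefix s n))"

text \<open>Nodes of the branch: the root (position None) and the formulas added by each step.\<close>
definition branch_nodes :: "(nat \<Rightarrow> step option) \<Rightarrow> (nat \<times> nat) option set" where
  "branch_nodes s = insert None
     {Some (n, k) | n k st. s n = Some st \<and> k < length (step_forms st)}"

definition prec :: "(nat \<Rightarrow> step option) \<Rightarrow> nat \<Rightarrow> nat \<Rightarrow> bool" where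
  "prec s i j \<longleftrightarrow> (\<exists>n \<psi>. s n = Some (Dstep i \<psi> j))"

end

theory Submission
  imports Defs
begin

text \<open>A chain \<open>i\<^sub>0 \<prec> i\<^sub>1 \<prec> \<dots>\<close> consists of [Dia]-applications at strictly increasing
  positions, because the nominal introduced by one of them is fresh and must already occur
  on the branch before the next one; hence the branch never ends. Conversely, on a branch
  that never ends every step adds a new formula. Apart from accessibility formulas, every
  formula on the branch is a quasi-subformula of the root formula or of the form
  \<open>@\<^sub>i j\<close>, \<open>@\<^sub>i \<not>j\<close>, \<open>@\<^sub>i \<not>\<Diamond>j\<close>, so infinitely many nominals occur. All of them are
  reachable along \<open>\<prec>\<close> from a nominal of the root formula, and \<open>\<prec>\<close> is finitely branching
  since [Dia] is applied at most once to each \<open>@\<^sub>i \<Diamond>\<psi>\<close>, with \<open>\<psi>\<close> a subformula of the root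
  formula. Koenig's lemma gives the infinite chain.\<close>

lemma subfs_refl: "\<phi> \<in> subfs \<phi>"
  by (cases \<phi>) auto

lemma subfs_trans: "\<psi> \<in> subfs \<phi> \<Longrightarrow> \<chi> \<in> subfs \<psi> \<Longrightarrow> \<chi> \<in> subfs \<phi>"
  by (induction \<phi>) auto

lemma subfs_closed:
  "Neg \<phi> \<in> subfs \<chi> \<Longrightarrow> \<phi> \<in> subfs \<chi>"
  "Dia \<phi> \<in> subfs \<chi> \<Longrightarrow> \<phi> \<in> subfs \<chi>"
  "At j \<phi> \<in> subfs \<chi> \<Longrightarrow> \<phi> \<in> subfs \<chi>"
  "Con \<phi> \<psi> \<in> subfs \<chi> \<Longrightarrow> \<phi> \<in> subfs \<chi>"
  "Con \<phi> \<psi> \<in> subfs \<chi> \<Longrightarrow> \<psi> \<in> subfs \<chi>"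
  by (erule subfs_trans, simp add: subfs_refl)+

lemma finite_subfs: "finite (subfs \<phi>)"
  by (induction \<phi>) auto

lemma finite_noms: "finite (noms \<phi>)"
  by (induction \<phi>) auto

lemma finite_lnoms: "finite (lnoms x)"
  by (simp add: lnoms_def finite_noms)

lemma nomsof_simps:
  "nomsof {} = {}"
  "nomsof (insert x A) = lnoms x \<union> nomsof A"
  "nomsof (A \<union> B) = nomsof A \<union> nomsof B"
  by (auto simp: nomsof_def)

lemma nomsof_mono: "A \<subseteq> B \<Longrightarrow> nomsof A \<subseteq> nomsof B"
  by (auto simp: nomsof_def)

lemma lnoms_subset_nomsof: "x \<in> F \<Longrightarrow> lnoms x \<subseteq> nomsof F"
  by (auto simp: nomsof_def)

lemma infinite_Union_strict_chain:
  fixes F :: "nat \<Rightarrow> 'a set"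
  assumes "\<And>n. F n \<subset> F (Suc n)"
  shows "infinite (\<Union>n. F n)"
proof
  assume fin: "finite (\<Union>n. F n)"
  have card_bound: "card (F n) \<le> card (\<Union>n. F n)" for n
    using fin by (intro card_mono) auto
  have "n \<le> card (F n)" for n
  proof (induction n)
    case (Suc n)
    have "finite (F (Suc n))"
      using fin by (rule finite_subset[rotated]) auto
    then have "card (F n) < card (F (Suc n))"
      using assms by (rule psubset_card_mono)
    with Suc show ?case by simp
  qed simp
  then have "Suc (card (\<Union>n. F n)) \<le> card (\<Union>n. F n)"
    using card_bound le_trans by blast
  then show False
    by simp
qed

lemma rtrancl_Image_infinite_successor:
  assumes "finite (R `` {i})" and "infinite (R\<^sup>* `` {i})"
  shows "\<exists>j. (i, j) \<in> R \<and> infinite (R\<^sup>* `` {j})"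
proof (rule ccontr)
  assume "\<not> ?thesis"
  then have "finite (insert i (\<Union>j\<in>R `` {i}. R\<^sup>* `` {j}))"
    using assms(1) by blast
  moreover have "R\<^sup>* `` {i} \<subseteq> insert i (\<Union>j\<in>R `` {i}. R\<^sup>* `` {j})"
  proof
    fix k
    assume "k \<in> R\<^sup>* `` {i}"
    then have "(i, k) \<in> R\<^sup>*" by simp
    then show "k \<in> insert i (\<Union>j\<in>R `` {i}. R\<^sup>* `` {j})"
      by (cases rule: converse_rtranclE) auto
  qed
  ultimately show False
    using assms(2) finite_subset by blast
qed

lemma koenig:
  assumes "\<And>i. finite (R `` {i})" and "infinite (R\<^sup>* `` {i})"
  shows "\<exists>g. g 0 = i \<and> (\<forall>n. (g n, g (Suc n)) \<in> R)"
proof -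
  let ?P = "\<lambda>n j. infinite (R\<^sup>* `` {j}) \<and> (n = 0 \<longrightarrow> j = i)"
  have "\<exists>g. \<forall>n. ?P n (g n) \<and> (g n, g (Suc n)) \<in> R"
  proof (rule dependent_nat_choice)
    show "\<exists>j. ?P 0 j"
      using assms(2) by blast
    show "\<exists>k. ?P (Suc n) k \<and> (j, k) \<in> R" if "?P n j" for n j
      using rtrancl_Image_infinite_successor[OF assms(1)] that by blast
  qed
  then show ?thesis
    by blast
qed

lemma prefix_Suc: "prefix s (Suc n) = prefix s n @ [the (s n)]"
  by (simp add: prefix_def)

lemma set_prefix_mono: "m \<le> n \<Longrightarrow> set (prefix s m) \<subseteq> set (prefix s n)"
  by (auto simp: prefix_def)

lemma forms_append: "forms r (ss @ [st]) = forms r ss \<union> set (step_forms st)"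
  by (auto simp: forms_def)

lemma nonacc_append: "nonacc r (ss @ [st]) = nonacc r ss \<union> step_nonacc st"
  by (auto simp: nonacc_def)

lemma forms_mono: "set ss \<subseteq> set ss' \<Longrightarrow> forms r ss \<subseteq> forms r ss'"
  by (auto simp: forms_def)

lemma step_nonacc_subset: "step_nonacc st \<subseteq> set (step_forms st)"
  by (cases st) auto

lemma nonacc_subset_forms: "nonacc r ss \<subseteq> forms r ss"
  using step_nonacc_subset by (fastforce simp: nonacc_def forms_def)

lemma forms_nonacc_or_accessibility:
  "x \<in> forms r ss \<Longrightarrow> x \<in> nonacc r ss \<or> (\<exists>j. snd x = Dia (Nom j))"
proof -
  have "x \<in> step_nonacc st \<or> (\<exists>j. snd x = Dia (Nom j))" if "x \<in> set (step_forms st)" for st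
    using that by (cases st) auto
  then show "x \<in> forms r ss \<Longrightarrow> ?thesis"
    unfolding forms_def nonacc_def by blast
qed

lemma branch_step_ok: "is_branch r s \<Longrightarrow> s n = Some st \<Longrightarrow> step_ok r (prefix s n) st"
  by (simp add: is_branch_def)

lemma branch_defined_before:
  assumes "is_branch r s" and "s n \<noteq> None" and "m \<le> n"
  shows "s m \<noteq> None"
  using assms(3,2)
proof (induction rule: inc_induct)
  case (step k)
  then show ?case
    using assms(1) by (auto simp: is_branch_def)
qed

lemma step_forms_nonempty: "step_ok r ss st \<Longrightarrow> step_forms st \<noteq> []"
  by (cases st) auto

lemma infinite_branch_nodes_iff:
  assumes "is_branch r s"
  shows "infinite (branch_nodes s) \<longleftrightarrow> (\<forall>n. s n \<noteq> None)"
proof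
  assume "\<forall>n. s n \<noteq> None"
  then have "range (\<lambda>n. Some (n, 0)) \<subseteq> branch_nodes s"
    using assms by (force simp: branch_nodes_def dest: branch_step_ok step_forms_nonempty)
  moreover have "inj (\<lambda>n. Some (n, 0::nat))"
    by (simp add: inj_def)
  ultimately show "infinite (branch_nodes s)"
    using inj_on_finite infinite_UNIV_nat by blast
next
  assume "infinite (branch_nodes s)"
  show "\<forall>n. s n \<noteq> None"
  proof (rule ccontr)
    assume "\<not> (\<forall>n. s n \<noteq> None)"
    then obtain N where "s N = None" by blast
    then have "n < N" if "s n \<noteq> None" for n
      using branch_defined_before[OF assms that] by (meson not_less)
    then have "branch_nodes s \<subseteq>
        insert None (Some ` (SIGMA n:{..<N}. {..<length (step_forms (the (s n)))}))"
      by (auto simp: branch_nodes_def)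
    then show False
      using \<open>infinite (branch_nodes s)\<close> finite_subset by blast
  qed
qed

lemma Dstep_fresh:
  assumes "is_branch r s" and "s n = Some (Dstep i \<psi> j)"
  shows "j \<notin> nomsof (forms r (prefix s n))"
  using branch_step_ok[OF assms] by (simp add: dia_ok_def)

lemma Dstep_premise:
  assumes "is_branch r s" and "s n = Some (Dstep i \<psi> j)"
  shows "(i, Dia \<psi>) \<in> nonacc r (prefix s n)"
  using branch_step_ok[OF assms] by (simp add: dia_ok_def)

lemma Dstep_of_successor_later:
  assumes b: "is_branch r s"
    and n: "s n = Some (Dstep i \<psi> j)" and m: "s m = Some (Dstep j \<psi>' k)"
  shows "n < m"
proof (rule ccontr)
  assume "\<not> n < m"
  have "(j, Dia \<psi>') \<in> forms r (prefix s m)"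
    using Dstep_premise[OF b m] nonacc_subset_forms by blast
  then have "j \<in> nomsof (forms r (prefix s m))"
    using lnoms_subset_nomsof by (fastforce simp: lnoms_def)
  also have "\<dots> \<subseteq> nomsof (forms r (prefix s n))"
    using \<open>\<not> n < m\<close> by (intro nomsof_mono forms_mono set_prefix_mono) simp
  finally show False
    using Dstep_fresh[OF b n] by blast
qed

lemma Dstep_unique:
  assumes b: "is_branch r s"
    and n: "s n = Some (Dstep i \<psi> j)" and m: "s m = Some (Dstep i \<psi> j')"
  shows "j = j'"
proof -
  have no_repeat: False if "s k = Some (Dstep i \<psi> l)" "s k' = Some (Dstep i \<psi> l')" "k < k'"
    for k k' l l'
  proof -
    have "Dstep i \<psi> l \<in> set (prefix s k')"
      using that by (force simp: prefix_def)
    then show False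
      using branch_step_ok[OF b that(2)] by (auto simp: dia_ok_def)
  qed
  have "n = m"
    using no_repeat[OF n m] no_repeat[OF m n] by (meson linorder_neqE_nat)
  then show ?thesis
    using n m by simp
qed

lemma forms_strict_mono:
  assumes b: "is_branch r s" and st: "s n = Some st"
  shows "forms r (prefix s n) \<subset> forms r (prefix s (Suc n))"
proof -
  have "\<not> set (step_forms st) \<subseteq> forms r (prefix s n)"
  proof (cases st)
    case (Ord cs)
    then show ?thesis
      using branch_step_ok[OF b st] by simp
  next
    case (Dstep i \<psi> j)
    then have "(j, \<psi>) \<notin> forms r (prefix s n)"
      using Dstep_fresh[OF b] st lnoms_subset_nomsof by (fastforce simp: lnoms_def)
    then show ?thesis
      using Dstep by simp
  qed
  then show ?thesis
    using st by (auto simp: prefix_Suc forms_append)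
qed

lemma Ord_step_nomsof:
  assumes "step_ok r ss (Ord cs)"
  shows "nomsof (set cs) \<subseteq> nomsof (forms r ss)"
proof -
  have "simple_concl (forms r ss) (nonacc r ss) (nomsof (forms r ss)) cs \<or> split_concl (forms r ss) cs"
    using assms by simp
  moreover have "nomsof (nonacc r ss) \<subseteq> nomsof (forms r ss)"
    by (rule nomsof_mono[OF nonacc_subset_forms])
  ultimately show ?thesis
    unfolding simple_concl_def split_concl_def
    by (elim disjE exE conjE)
      (auto simp: nomsof_simps lnoms_def Box_def
        dest!: subsetD[OF nonacc_subset_forms] lnoms_subset_nomsof)
qed

text \<open>Besides quasi-subformulas of the root formula, [Ref] adds \<open>Nom j\<close>, (I) adds
  \<open>Neg (Dia (Nom j))\<close>, and [neg-Dia] applied to the latter adds \<open>Neg (Nom j)\<close>.\<close>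

definition admissible :: "fm set \<Rightarrow> fm \<Rightarrow> bool" where
  "admissible S \<phi> \<longleftrightarrow> \<phi> \<in> S \<or> (\<exists>\<chi>\<in>S. \<phi> = Neg \<chi>) \<or>
     (\<exists>j. \<phi> = Nom j \<or> \<phi> = Neg (Nom j) \<or> \<phi> = Neg (Dia (Nom j)))"

lemma step_nonacc_admissible:
  assumes na: "\<forall>x\<in>nonacc r ss. admissible (subfs (snd r)) (snd x)"
    and ok: "step_ok r ss st" and x: "x \<in> step_nonacc st"
  shows "admissible (subfs (snd r)) (snd x)"
proof -
  let ?S = "subfs (snd r)"
  have F: "admissible ?S (snd x) \<or> (\<exists>j. snd x = Dia (Nom j))" if "x \<in> forms r ss" for x
    using na forms_nonacc_or_accessibility[OF that] by blast
  show ?thesis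
  proof (cases st)
    case (Ord cs)
    with ok have "simple_concl (forms r ss) (nonacc r ss) (nomsof (forms r ss)) cs \<or>
        split_concl (forms r ss) cs"
      by simp
    then show ?thesis
      using Ord x F na unfolding simple_concl_def split_concl_def
      by (elim disjE exE conjE)
        (fastforce simp: admissible_def Box_def subfs_refl dest: subfs_closed)+
  next
    case (Dstep i \<psi> j)
    with ok have "(i, Dia \<psi>) \<in> nonacc r ss"
      by (simp add: dia_ok_def)
    with na have "\<psi> \<in> ?S"
      by (fastforce simp: admissible_def subfs_refl dest: subfs_closed)
    then show ?thesis
      using Dstep x by (simp add: admissible_def)
  qed
qed

lemma nonacc_admissible:
  assumes b: "is_branch r s" and defined: "\<forall>m<n. s m \<noteq> None"
  shows "\<forall>x\<in>nonacc r (prefix s n). admissible (subfs (snd r)) (snd x)"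
  using defined
proof (induction n)
  case 0
  then show ?case
    by (simp add: prefix_def nonacc_def admissible_def subfs_refl)
next
  case (Suc n)
  then obtain st where st: "s n = Some st"
    by auto
  then have "nonacc r (prefix s (Suc n)) = nonacc r (prefix s n) \<union> step_nonacc st"
    by (simp add: prefix_Suc nonacc_append)
  then show ?case
    using Suc step_nonacc_admissible[OF _ branch_step_ok[OF b st]] by auto
qed

lemma finite_admissible_or_accessibility:
  assumes "finite S" and "finite N"
  shows "finite {\<phi>. (admissible S \<phi> \<or> (\<exists>j. \<phi> = Dia (Nom j))) \<and> noms \<phi> \<subseteq> N}"
proof (rule finite_subset)
  show "{\<phi>. (admissible S \<phi> \<or> (\<exists>j. \<phi> = Dia (Nom j))) \<and> noms \<phi> \<subseteq> N} \<subseteq>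
      S \<union> Neg ` S \<union> (\<Union>j\<in>N. {Nom j, Neg (Nom j), Neg (Dia (Nom j)), Dia (Nom j)})"
    by (auto simp: admissible_def)
  show "finite (S \<union> Neg ` S \<union> (\<Union>j\<in>N. {Nom j, Neg (Nom j), Neg (Dia (Nom j)), Dia (Nom j)}))"
    using assms by simp
qed

lemma Dstep_subformula:
  assumes b: "is_branch r s" and n: "s n = Some (Dstep i \<psi> j)"
  shows "\<psi> \<in> subfs (snd r)"
proof -
  have defined: "\<forall>m<n. s m \<noteq> None"
  proof (intro allI impI)
    fix m
    assume "m < n"
    then show "s m \<noteq> None"
      using branch_defined_before[OF b, of n m] n by simp
  qed
  have "admissible (subfs (snd r)) (Dia \<psi>)"
    using nonacc_admissible[OF b defined] Dstep_premise[OF b n] by fastforce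
  then show ?thesis
    by (auto simp: admissible_def dest: subfs_closed)
qed

lemma endless_branch_infinite_nomsof:
  assumes b: "is_branch r s" and endless: "\<forall>n. s n \<noteq> None"
  shows "infinite (\<Union>n. nomsof (forms r (prefix s n)))" (is "infinite ?N")
proof
  assume "finite ?N"
  let ?C = "{\<phi>. (admissible (subfs (snd r)) \<phi> \<or> (\<exists>j. \<phi> = Dia (Nom j))) \<and> noms \<phi> \<subseteq> ?N}"
  have "finite (?N \<times> ?C)"
    using \<open>finite ?N\<close> by (simp add: finite_admissible_or_accessibility finite_subfs)
  moreover have "forms r (prefix s n) \<subseteq> ?N \<times> ?C" for n
  proof
    fix x
    assume x: "x \<in> forms r (prefix s n)"
    then have "lnoms x \<subseteq> ?N"
      using lnoms_subset_nomsof by blast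
    moreover have "admissible (subfs (snd r)) (snd x) \<or> (\<exists>j. snd x = Dia (Nom j))"
      using forms_nonacc_or_accessibility[OF x] nonacc_admissible[OF b] endless by blast
    ultimately show "x \<in> ?N \<times> ?C"
      by (cases x) (simp add: lnoms_def)
  qed
  moreover have "infinite (\<Union>n. forms r (prefix s n))"
    using forms_strict_mono[OF b] endless by (intro infinite_Union_strict_chain) blast
  ultimately show False
    by (meson UN_least finite_subset)
qed

abbreviation prec_rel :: "(nat \<Rightarrow> step option) \<Rightarrow> (nat \<times> nat) set" where
  "prec_rel s \<equiv> {(i, j). prec s i j}"

lemma nomsof_forms_reachable:
  assumes b: "is_branch r s" and defined: "\<forall>m<n. s m \<noteq> None"
  shows "nomsof (forms r (prefix s n)) \<subseteq> (prec_rel s)\<^sup>* `` lnoms r"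
  using defined
proof (induction n)
  case 0
  then show ?case
    by (force simp: prefix_def forms_def nomsof_simps)
next
  case (Suc n)
  then obtain st where st: "s n = Some st"
    by auto
  have IH: "nomsof (forms r (prefix s n)) \<subseteq> (prec_rel s)\<^sup>* `` lnoms r"
    using Suc by simp
  have new: "nomsof (forms r (prefix s (Suc n))) =
      nomsof (forms r (prefix s n)) \<union> nomsof (set (step_forms st))"
    using st by (simp add: prefix_Suc forms_append nomsof_simps)
  show ?case
  proof (cases st)
    case (Ord cs)
    then have "nomsof (set cs) \<subseteq> nomsof (forms r (prefix s n))"
      using Ord_step_nomsof branch_step_ok[OF b st] by simp
    then show ?thesis
      using new IH Ord by auto
  next
    case (Dstep i \<psi> j)
    have premise: "lnoms (i, Dia \<psi>) \<subseteq> (prec_rel s)\<^sup>* `` lnoms r"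
      using Dstep_premise[OF b] st Dstep nonacc_subset_forms lnoms_subset_nomsof IH by blast
    then obtain i\<^sub>0 where "i\<^sub>0 \<in> lnoms r" "(i\<^sub>0, i) \<in> (prec_rel s)\<^sup>*"
      by (auto simp: lnoms_def)
    moreover have "(i, j) \<in> prec_rel s"
      using st Dstep by (auto simp: prec_def)
    ultimately have "j \<in> (prec_rel s)\<^sup>* `` lnoms r"
      by (meson ImageI rtrancl_into_rtrancl)
    with premise have "insert j (lnoms (i, Dia \<psi>)) \<subseteq> (prec_rel s)\<^sup>* `` lnoms r"
      by simp
    moreover have "nomsof (set (step_forms st)) = insert j (lnoms (i, Dia \<psi>))"
      using Dstep by (auto simp: nomsof_def lnoms_def)
    ultimately show ?thesis
      using new IH by auto
  qed
qed

lemma finite_prec_successors: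
  assumes b: "is_branch r s"
  shows "finite (prec_rel s `` {i})"
proof -
  let ?succ = "\<lambda>\<psi>. {j. \<exists>n. s n = Some (Dstep i \<psi> j)}"
  have "finite (?succ \<psi>)" for \<psi>
  proof (cases "?succ \<psi> = {}")
    case False
    then obtain j n where "s n = Some (Dstep i \<psi> j)"
      by blast
    then have "?succ \<psi> \<subseteq> {j}"
      using Dstep_unique[OF b] by blast
    then show ?thesis
      using finite_subset by blast
  qed simp
  moreover have "prec_rel s `` {i} \<subseteq> (\<Union>\<psi>\<in>subfs (snd r). ?succ \<psi>)"
    unfolding prec_def using Dstep_subformula[OF b] by blast
  ultimately show ?thesis
    by (meson finite_UN_I finite_subfs finite_subset)
qed

lemma endless_branch_prec_chain:
  assumes b: "is_branch r s" and endless: "\<forall>n. s n \<noteq> None"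
  shows "\<exists>g. \<forall>n. prec s (g n) (g (Suc n))"
proof -
  have "(\<Union>n. nomsof (forms r (prefix s n))) \<subseteq> (prec_rel s)\<^sup>* `` lnoms r"
    using nomsof_forms_reachable[OF b] endless by blast
  then have "infinite (\<Union>i\<in>lnoms r. (prec_rel s)\<^sup>* `` {i})"
    using endless_branch_infinite_nomsof[OF b endless] finite_subset by (metis Image_eq_UN)
  then obtain i where "infinite ((prec_rel s)\<^sup>* `` {i})"
    using finite_lnoms by blast
  then show ?thesis
    using koenig[OF finite_prec_successors[OF b]] by auto
qed

lemma prec_chain_endless:
  assumes b: "is_branch r s" and chain: "\<forall>n. prec s (g n) (g (Suc n))"
  shows "s n \<noteq> None"
proof -
  obtain N \<Psi> where N: "\<And>k. s (N k) = Some (Dstep (g k) (\<Psi> k) (g (Suc k)))"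
    using chain unfolding prec_def by metis
  have "strict_mono N"
    using Dstep_of_successor_later[OF b N N] by (simp add: strict_mono_Suc_iff)
  then have "n \<le> N n"
    by (rule strict_mono_imp_increasing)
  then show ?thesis
    using branch_defined_before[OF b, of "N n" n] N by simp
qed

theorem lemma4:
  fixes r :: lfm and s :: "nat \<Rightarrow> step option"
  assumes "is_branch r s"
  shows "infinite (branch_nodes s) \<longleftrightarrow> (\<exists>g :: nat \<Rightarrow> nat. \<forall>n. prec s (g n) (g (Suc n)))"
  using infinite_branch_nodes_iff[OF assms] endless_branch_prec_chain[OF assms]
    prec_chain_endless[OF assms] by blast

end
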